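(* Let $X_n\in L_G^{1^*}(\Omega)$ with $X_n\ge Y$ for all $n\ge1$, where $Y\in\mathbb{L}^1(\Omega)$. Then $\liminf_{n\to\infty}X_n\in\mathcal{L}_G^{1^*_*}(\Omega)$.
   Context: $\Omega=C_0^d(\mathbb{R}^+)$ is the space of continuous paths $\omega:[0,\infty)\to\mathbb{R}^d$ with $\omega_0=0$, $B$ the canonical process, $\hat{\mathbb{E}}$ the $G$-expectation ($G$ a monotone sublinear function on $d\times d$ symmetric matrices). $L^1_G(\Omega)$ is the completion of bounded Lipschitz cylinder functions $\varphi(B_{t_1},\dots,B_{t_n})$ under $\hat{\mathbb{E}}[|\cdot|]$. $\mathcal{P}$ is a weakly compact set of probability measures representing $\hat{\mathbb{E}}$, $\hat{\mathbb{E}}[X]=\sup_{P\in\mathcal{P}}E_P[X]$ for Borel $X$, $c(A)=\sup_{P\in\mathcal{P}}P(A)$, q.s. = outside a capacity-zero set. $L^0(\Omega)$ is the set of Borel maps $\Omega\to[-\infty,\infty]$; $\mathbb{L}^1(\Omega)=\{X\in L^0(\Omega):\hat{\mathbb{E}}[|X|]<\infty\}$; $L_G^{1^*}(\Omega)=\{X\in\mathbb{L}^1(\Omega):\exists X_n\in L^1_G(\Omega),X_n\downarrow X\text{ q.s.}\}$; $\mathcal{L}_G^{1^*_*}(\Omega)=\{X\in L^0(\Omega):\exists X_n\in L_G^{1^*}(\Omega),X_n\uparrow X\text{ q.s.}\}$. *)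

theory Defs
  imports "HOL-Probability.Probability"
begin

text \<open>Paths are represented as total functions real => R^d that are continuous on [0,oo),
  vanish at 0, and are (canonically) 0 for negative times.\<close>

definition Omega :: "(real \<Rightarrow> real ^ 'd) set" where
  "Omega = {\<omega>. continuous_on {0..} \<omega> \<and> \<omega> 0 = 0 \<and> (\<forall>t<0. \<omega> t = 0)}"

text \<open>Metric of locally uniform convergence.\<close>
definition path_dist :: "(real \<Rightarrow> real ^ 'd) \<Rightarrow> (real \<Rightarrow> real ^ 'd) \<Rightarrow> real" where
  "path_dist \<omega>1 \<omega>2 =
     (\<Sum>i. (1/2) ^ Suc i * min 1 (SUP t\<in>{0..real (Suc i)}. norm (\<omega>1 t - \<omega>2 t)))"

definition path_open :: "(real \<Rightarrow> real ^ 'd) set \<Rightarrow> bool" where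
  "path_open U \<longleftrightarrow> U \<subseteq> Omega \<and>
     (\<forall>x\<in>U. \<exists>e>0. \<forall>y\<in>Omega. path_dist x y < e \<longrightarrow> y \<in> U)"

definition path_space :: "(real \<Rightarrow> real ^ 'd) measure" where
  "path_space = sigma Omega {U. path_open U}"

definition path_continuous :: "((real \<Rightarrow> real ^ 'd) \<Rightarrow> real) \<Rightarrow> bool" where
  "path_continuous f \<longleftrightarrow> (\<forall>\<omega>\<in>Omega. \<forall>e>0. \<exists>\<delta>>0. \<forall>\<omega>'\<in>Omega.
      path_dist \<omega> \<omega>' < \<delta> \<longrightarrow> \<bar>f \<omega> - f \<omega>'\<bar> < e)"

definition prob_on_paths :: "(real \<Rightarrow> real ^ 'd) measure \<Rightarrow> bool" where
  "prob_on_paths P \<longleftrightarrow> prob_space P \<and> sets P = sets path_space \<and> space P = Omega"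

definition weak_conv ::
  "(nat \<Rightarrow> (real \<Rightarrow> real ^ 'd) measure) \<Rightarrow> (real \<Rightarrow> real ^ 'd) measure \<Rightarrow> bool" where
  "weak_conv Ps P \<longleftrightarrow> (\<forall>f. path_continuous f \<and> (\<exists>B. \<forall>\<omega>\<in>Omega. \<bar>f \<omega>\<bar> \<le> B) \<longrightarrow>
      (\<lambda>k. integral\<^sup>L (Ps k) f) \<longlonglongrightarrow> integral\<^sup>L P f)"

definition weakly_compact :: "(real \<Rightarrow> real ^ 'd) measure set \<Rightarrow> bool" where
  "weakly_compact \<P> \<longleftrightarrow> (\<forall>Ps. (\<forall>k. Ps k \<in> \<P>) \<longrightarrow>
      (\<exists>(r::nat \<Rightarrow> nat) P. strict_mono r \<and> P \<in> \<P> \<and> weak_conv (Ps \<circ> r) P))"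

definition upper_E_abs :: "(real \<Rightarrow> real ^ 'd) measure set \<Rightarrow> ((real \<Rightarrow> real ^ 'd) \<Rightarrow> ereal) \<Rightarrow> ennreal" where
  "upper_E_abs \<P> X = (SUP P\<in>\<P>. \<integral>\<^sup>+ \<omega>. e2ennreal \<bar>X \<omega>\<bar> \<partial>P)"

definition capacity :: "(real \<Rightarrow> real ^ 'd) measure set \<Rightarrow> (real \<Rightarrow> real ^ 'd) set \<Rightarrow> ennreal" where
  "capacity \<P> A = (SUP P\<in>\<P>. emeasure P A)"

definition quasi_surely :: "(real \<Rightarrow> real ^ 'd) measure set \<Rightarrow> ((real \<Rightarrow> real ^ 'd) \<Rightarrow> bool) \<Rightarrow> bool" where
  "quasi_surely \<P> Q \<longleftrightarrow> (\<exists>N \<in> sets path_space. capacity \<P> N = 0 \<and> (\<forall>\<omega>\<in>Omega - N. Q \<omega>))"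

definition L0 :: "((real \<Rightarrow> real ^ 'd) \<Rightarrow> ereal) set" where
  "L0 = borel_measurable path_space"

definition LL1 :: "(real \<Rightarrow> real ^ 'd) measure set \<Rightarrow> ((real \<Rightarrow> real ^ 'd) \<Rightarrow> ereal) set" where
  "LL1 \<P> = {X \<in> L0. upper_E_abs \<P> X < \<infinity>}"

definition lip_cyl :: "((real \<Rightarrow> real ^ 'd) \<Rightarrow> real) \<Rightarrow> bool" where
  "lip_cyl X \<longleftrightarrow> (\<exists>(n::nat) (ts::nat \<Rightarrow> real) (\<phi>::(nat \<Rightarrow> real ^ 'd) \<Rightarrow> real) L M.
      (\<forall>i<n. 0 \<le> ts i) \<and> (\<forall>x. \<bar>\<phi> x\<bar> \<le> M) \<and>
      (\<forall>x y. \<bar>\<phi> x - \<phi> y\<bar> \<le> L * (\<Sum>i<n. norm (x i - y i))) \<and>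
      X = (\<lambda>\<omega>. \<phi> (\<lambda>i. \<omega> (ts i))))"

text \<open>L^1_G: completion of the Lipschitz cylinder functions under \<^emph>\<open>E\<close>[|.|], realised
  as Borel random variables that are limits of cylinder functions in that seminorm.\<close>
definition L1G :: "(real \<Rightarrow> real ^ 'd) measure set \<Rightarrow> ((real \<Rightarrow> real ^ 'd) \<Rightarrow> ereal) set" where
  "L1G \<P> = {X \<in> L0. \<exists>Xs. (\<forall>n. lip_cyl (Xs n)) \<and>
      (\<lambda>n. upper_E_abs \<P> (\<lambda>\<omega>. X \<omega> - ereal (Xs n \<omega>))) \<longlonglongrightarrow> 0}"

definition L1G_star :: "(real \<Rightarrow> real ^ 'd) measure set \<Rightarrow> ((real \<Rightarrow> real ^ 'd) \<Rightarrow> ereal) set" where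
  "L1G_star \<P> = {X \<in> LL1 \<P>. \<exists>Xs. (\<forall>n. Xs n \<in> L1G \<P>) \<and>
      quasi_surely \<P> (\<lambda>\<omega>. decseq (\<lambda>n. Xs n \<omega>) \<and> (\<lambda>n. Xs n \<omega>) \<longlonglongrightarrow> X \<omega>)}"

definition L1G_star_star :: "(real \<Rightarrow> real ^ 'd) measure set \<Rightarrow> ((real \<Rightarrow> real ^ 'd) \<Rightarrow> ereal) set" where
  "L1G_star_star \<P> = {X \<in> L0. \<exists>Xs. (\<forall>n. Xs n \<in> L1G_star \<P>) \<and>
      quasi_surely \<P> (\<lambda>\<omega>. incseq (\<lambda>n. Xs n \<omega>) \<and> (\<lambda>n. Xs n \<omega>) \<longlonglongrightarrow> X \<omega>)}"

end

theory Submission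
  imports Defs
begin

text \<open>For fixed \<open>n\<close> let \<open>Z\<^sub>n = inf\<^sub>m\<^sub>\<ge>\<^sub>n X\<^sub>m\<close>; it lies between \<open>Y\<close> and \<open>X\<^sub>n\<close>, hence is
  in \<open>\<LL>\<^sup>1\<close>. Choose \<open>A\<^sub>m\<^sub>j \<in> L\<^sup>1\<^sub>G\<close> decreasing in \<open>j\<close> to \<open>X\<^sub>m\<close> quasi-surely. Since bounded
  Lipschitz cylinder functions are closed under \<open>min\<close>, so is \<open>L\<^sup>1\<^sub>G\<close>, and the diagonal minima
  \<open>min\<^sub>m\<^sub>\<le>\<^sub>j A\<^sub>n\<^sub>+\<^sub>m\<^sub>,\<^sub>j\<close> are in \<open>L\<^sup>1\<^sub>G\<close> and decrease to \<open>Z\<^sub>n\<close> quasi-surely, because countably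
  many capacity-null sets have a capacity-null union. Hence \<open>Z\<^sub>n \<in> L\<^sub>G\<^sup>1\<^sup>*\<close>, and \<open>Z\<^sub>n\<close>
  increases to \<open>liminf X\<^sub>n\<close> everywhere.\<close>

lemma space_path_space: "space path_space = Omega"
  unfolding path_space_def by (simp add: space_measure_of_conv)

lemma path_open_in_sets: "path_open U \<Longrightarrow> U \<in> sets path_space"
  unfolding path_space_def by (subst sets_measure_of) (auto simp: path_open_def)

lemma bdd_above_path_diff:
  fixes x y :: "real \<Rightarrow> real ^ 'd"
  assumes "x \<in> Omega" "y \<in> Omega"
  shows "bdd_above ((\<lambda>t. norm (x t - y t)) ` {0..c})"
proof -
  have "continuous_on {0..c} (\<lambda>t. norm (x t - y t))"
    using assms unfolding Omega_def
    by (intro continuous_intros; auto intro: continuous_on_subset)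
  then show ?thesis
    by (intro bounded_imp_bdd_above compact_imp_bounded compact_continuous_image) auto
qed

lemma min_norm_le_path_dist:
  fixes x y :: "real \<Rightarrow> real ^ 'd"
  assumes "x \<in> Omega" "y \<in> Omega" "0 \<le> t" "t \<le> real (Suc k)"
  shows "min 1 (norm (x t - y t)) \<le> 2 ^ Suc k * path_dist x y"
proof -
  define S where "S i = (SUP t\<in>{0..real (Suc i)}. norm (x t - y t))" for i
  define g where "g i = (1/2::real) ^ Suc i * min 1 (S i)" for i
  have le_S: "norm (x s - y s) \<le> S i" if "s \<in> {0..real (Suc i)}" for s i
    unfolding S_def using bdd_above_path_diff[OF assms(1,2)] that by (intro cSUP_upper) auto
  have "0 \<le> S i" for i
    using order_trans[OF norm_ge_zero le_S[of 0 i]] by simp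
  then have g_nonneg: "0 \<le> g i" for i
    unfolding g_def by simp
  have g_le: "g i \<le> (1/2) ^ Suc i" for i
    unfolding g_def by (simp add: mult_left_le)
  have "summable g"
    by (rule summable_comparison_test[where g="\<lambda>i. (1/2::real) ^ Suc i"]) (use g_nonneg g_le in auto)
  then have "g k \<le> suminf g"
    using sum_le_suminf[of g "{k}"] g_nonneg by simp
  also have "suminf g = path_dist x y"
    unfolding path_dist_def g_def S_def by simp
  finally have g_le_dist: "g k \<le> path_dist x y" .
  have "min 1 (norm (x t - y t)) \<le> min 1 (S k)"
    using le_S[of t k] assms(3,4) by auto
  also have "\<dots> = 2 ^ Suc k * g k"
    unfolding g_def by (simp add: power_one_over)
  also have "\<dots> \<le> 2 ^ Suc k * path_dist x y"
    using g_le_dist by (intro mult_left_mono) auto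
  finally show ?thesis .
qed

lemma path_dist_nonneg:
  fixes x y :: "real \<Rightarrow> real ^ 'd"
  assumes "x \<in> Omega" "y \<in> Omega"
  shows "0 \<le> path_dist x y"
  using min_norm_le_path_dist[OF assms, of 0 0] assms by (simp add: Omega_def)

lemma norm_le_path_dist:
  fixes x y :: "real \<Rightarrow> real ^ 'd"
  assumes "x \<in> Omega" "y \<in> Omega" "0 \<le> t" "t \<le> real (Suc k)"
    and close: "path_dist x y < (1/2) ^ Suc k"
  shows "norm (x t - y t) \<le> 2 ^ Suc k * path_dist x y"
proof -
  have "2 ^ Suc k * path_dist x y < 2 ^ Suc k * (1/2) ^ Suc k"
    using close by (intro mult_strict_left_mono) auto
  then have "2 ^ Suc k * path_dist x y < 1" by (simp add: power_one_over)
  then show ?thesis using min_norm_le_path_dist[OF assms(1-4)] by linarith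
qed

lemma lip_cyl_path_continuous:
  fixes f :: "(real \<Rightarrow> real ^ 'd) \<Rightarrow> real"
  assumes "lip_cyl f"
  shows "path_continuous f"
  unfolding path_continuous_def
proof (intro ballI allI impI)
  fix x :: "real \<Rightarrow> real ^ 'd" and e :: real
  assume x: "x \<in> Omega" and e: "e > 0"
  obtain n ts L and \<phi> :: "(nat \<Rightarrow> real ^ 'd) \<Rightarrow> real" where ts: "\<forall>i<n. 0 \<le> ts i"
    and lip: "\<forall>x y. \<bar>\<phi> x - \<phi> y\<bar> \<le> L * (\<Sum>i<n. norm (x i - y i))"
    and f: "f = (\<lambda>\<omega>. \<phi> (\<lambda>i. \<omega> (ts i)))"
    using assms unfolding lip_cyl_def by blast
  define k where "k = nat \<lceil>\<Sum>i<n. ts i\<rceil>"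
  have ts_le: "ts i \<le> real (Suc k)" if "i < n" for i
  proof -
    have "ts i \<le> (\<Sum>i<n. ts i)" using ts that by (intro member_le_sum) auto
    then show ?thesis unfolding k_def by linarith
  qed
  define C where "C = (\<bar>L\<bar> + 1) * (real n + 1) * 2 ^ Suc k"
  have C: "C > 0" unfolding C_def by (intro mult_pos_pos) auto
  show "\<exists>\<delta>>0. \<forall>y\<in>Omega. path_dist x y < \<delta> \<longrightarrow> \<bar>f x - f y\<bar> < e"
  proof (intro exI[of _ "min ((1/2) ^ Suc k) (e / C)"] conjI ballI impI)
    fix y assume y: "y \<in> Omega" and close: "path_dist x y < min ((1/2) ^ Suc k) (e / C)"
    let ?d = "path_dist x y"
    have "\<bar>f x - f y\<bar> \<le> L * (\<Sum>i<n. norm (x (ts i) - y (ts i)))"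
      using lip f by simp
    also have "\<dots> \<le> \<bar>L\<bar> * (\<Sum>i<n. norm (x (ts i) - y (ts i)))"
      by (intro mult_right_mono) (auto intro: sum_nonneg)
    also have "\<dots> \<le> \<bar>L\<bar> * (\<Sum>i<n. 2 ^ Suc k * ?d)"
      using norm_le_path_dist[OF x y] ts ts_le close by (intro mult_left_mono sum_mono) auto
    also have "\<dots> = (\<bar>L\<bar> * real n) * (2 ^ Suc k * ?d)"
      by simp
    also have "\<dots> \<le> ((\<bar>L\<bar> + 1) * (real n + 1)) * (2 ^ Suc k * ?d)"
      using path_dist_nonneg[OF x y] by (intro mult_right_mono mult_mono) auto
    also have "\<dots> = C * ?d"
      unfolding C_def by simp
    also have "\<dots> < e"
      using close C by (simp add: pos_less_divide_eq mult.commute)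
    finally show "\<bar>f x - f y\<bar> < e" .
  qed (use C e in auto)
qed

lemma path_continuous_measurable:
  assumes "path_continuous f"
  shows "f \<in> borel_measurable path_space"
proof (rule borel_measurableI)
  fix S :: "real set" assume S: "open S"
  have "path_open (f -` S \<inter> Omega)"
    unfolding path_open_def
  proof (intro conjI ballI)
    fix x assume x: "x \<in> f -` S \<inter> Omega"
    then obtain e where e: "e > 0" "ball (f x) e \<subseteq> S" using S open_contains_ball by blast
    then obtain \<delta> where "\<delta> > 0" "\<forall>y\<in>Omega. path_dist x y < \<delta> \<longrightarrow> \<bar>f x - f y\<bar> < e"
      using assms x unfolding path_continuous_def by blast
    then show "\<exists>e>0. \<forall>y\<in>Omega. path_dist x y < e \<longrightarrow> y \<in> f -` S \<inter> Omega"
      using e(2) by (intro exI[of _ \<delta>]) (auto simp: dist_real_def subset_iff)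
  qed auto
  then show "f -` S \<inter> space path_space \<in> sets path_space"
    by (simp add: path_open_in_sets space_path_space)
qed

lemma lipschitz_sum_reindex:
  fixes \<phi> :: "(nat \<Rightarrow> 'v::real_normed_vector) \<Rightarrow> real" and r :: "nat \<Rightarrow> nat"
  assumes lip: "\<forall>x y. \<bar>\<phi> x - \<phi> y\<bar> \<le> L * (\<Sum>i<n. norm (x i - y i))"
    and r: "inj_on r {..<n}" "r ` {..<n} \<subseteq> {..<N}"
  shows "\<bar>\<phi> (x \<circ> r) - \<phi> (y \<circ> r)\<bar> \<le> \<bar>L\<bar> * (\<Sum>i<N. norm (x i - y i))"
proof -
  have "\<bar>\<phi> (x \<circ> r) - \<phi> (y \<circ> r)\<bar> \<le> L * (\<Sum>i<n. norm (x (r i) - y (r i)))"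
    using lip[rule_format, of "x \<circ> r" "y \<circ> r"] by simp
  also have "\<dots> \<le> \<bar>L\<bar> * (\<Sum>i<n. norm (x (r i) - y (r i)))"
    by (intro mult_right_mono) (auto intro: sum_nonneg)
  also have "\<dots> = \<bar>L\<bar> * (\<Sum>i\<in>r ` {..<n}. norm (x i - y i))"
    by (simp add: sum.reindex[OF r(1)])
  also have "\<dots> \<le> \<bar>L\<bar> * (\<Sum>i<N. norm (x i - y i))"
    using r(2) by (intro mult_left_mono sum_mono2) auto
  finally show ?thesis .
qed

lemma lip_cyl_min:
  fixes f g :: "(real \<Rightarrow> real ^ 'd) \<Rightarrow> real"
  assumes "lip_cyl f" "lip_cyl g"
  shows "lip_cyl (\<lambda>\<omega>. min (f \<omega>) (g \<omega>))"
proof -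
  obtain n ts L M and \<phi> :: "(nat \<Rightarrow> real ^ 'd) \<Rightarrow> real"
    where ts: "\<forall>i<n. 0 \<le> ts i" and M: "\<forall>x. \<bar>\<phi> x\<bar> \<le> M"
      and lip: "\<forall>x y. \<bar>\<phi> x - \<phi> y\<bar> \<le> L * (\<Sum>i<n. norm (x i - y i))"
      and f: "f = (\<lambda>\<omega>. \<phi> (\<lambda>i. \<omega> (ts i)))"
    using assms(1) unfolding lip_cyl_def by blast
  obtain n' ts' L' M' and \<psi> :: "(nat \<Rightarrow> real ^ 'd) \<Rightarrow> real"
    where ts': "\<forall>i<n'. 0 \<le> ts' i" and M': "\<forall>x. \<bar>\<psi> x\<bar> \<le> M'"
      and lip': "\<forall>x y. \<bar>\<psi> x - \<psi> y\<bar> \<le> L' * (\<Sum>i<n'. norm (x i - y i))"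
      and g: "g = (\<lambda>\<omega>. \<psi> (\<lambda>i. \<omega> (ts' i)))"
    using assms(2) unfolding lip_cyl_def by blast
  \<comment> \<open>Run both cylinder functions on the concatenated time grid.\<close>
  define T where "T i = (if i < n then ts i else ts' (i - n))" for i
  define \<eta> where "\<eta> x = min (\<phi> x) (\<psi> (x \<circ> (\<lambda>i. i + n)))" for x :: "nat \<Rightarrow> real ^ 'd"
  have \<phi>_local: "\<phi> x = \<phi> y" if "\<forall>i<n. x i = y i" for x y
    using lip[rule_format, of x y] that by simp
  have "\<bar>\<eta> x - \<eta> y\<bar> \<le> (\<bar>L\<bar> + \<bar>L'\<bar>) * (\<Sum>i<n + n'. norm (x i - y i))" for x y
  proof -
    have "\<bar>\<phi> (x \<circ> id) - \<phi> (y \<circ> id)\<bar> \<le> \<bar>L\<bar> * (\<Sum>i<n + n'. norm (x i - y i))"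
      by (rule lipschitz_sum_reindex[OF lip]) auto
    moreover have "\<bar>\<psi> (x \<circ> (\<lambda>i. i + n)) - \<psi> (y \<circ> (\<lambda>i. i + n))\<bar>
        \<le> \<bar>L'\<bar> * (\<Sum>i<n + n'. norm (x i - y i))"
      by (rule lipschitz_sum_reindex[OF lip']) (auto simp: inj_on_def)
    ultimately show ?thesis
      unfolding \<eta>_def by (simp add: min_def abs_le_iff distrib_right split: if_splits)
  qed
  moreover have "\<bar>\<eta> x\<bar> \<le> max M M'" for x
    using M[rule_format, of x] M'[rule_format, of "x \<circ> (\<lambda>i. i + n)"]
    unfolding \<eta>_def by (auto simp: min_def abs_le_iff)
  moreover have "(\<lambda>\<omega>. min (f \<omega>) (g \<omega>)) = (\<lambda>\<omega>. \<eta> (\<lambda>i. \<omega> (T i)))"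
  proof
    fix \<omega> :: "real \<Rightarrow> real ^ 'd"
    have "\<phi> (\<lambda>i. \<omega> (ts i)) = \<phi> (\<lambda>i. \<omega> (T i))"
      by (rule \<phi>_local) (simp add: T_def)
    then show "min (f \<omega>) (g \<omega>) = \<eta> (\<lambda>i. \<omega> (T i))"
      unfolding \<eta>_def f g T_def by (simp add: comp_def)
  qed
  moreover have "\<forall>i<n + n'. 0 \<le> T i"
    using ts ts' unfolding T_def by auto
  ultimately show ?thesis
    unfolding lip_cyl_def by blast
qed

lemma e2ennreal_add:
  assumes "0 \<le> (a::ereal)" "0 \<le> b"
  shows "e2ennreal (a + b) = e2ennreal a + e2ennreal b"
proof -
  have "enn2ereal (e2ennreal a + e2ennreal b) = a + b"
    by (simp add: plus_ennreal.rep_eq enn2ereal_e2ennreal assms)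
  then show ?thesis by (metis e2ennreal_enn2ereal)
qed

lemma measurable_path_space_imp_measurable:
  assumes "prob_on_paths P" "f \<in> borel_measurable path_space"
  shows "f \<in> borel_measurable P"
  using assms measurable_cong_sets unfolding prob_on_paths_def by blast

lemma upper_E_abs_le_add:
  fixes f g h :: "(real \<Rightarrow> real ^ 'd) \<Rightarrow> ereal"
  assumes P: "\<forall>P\<in>\<P>. prob_on_paths P"
    and f: "f \<in> borel_measurable path_space" and g: "g \<in> borel_measurable path_space"
    and le: "\<forall>\<omega>\<in>Omega. \<bar>h \<omega>\<bar> \<le> \<bar>f \<omega>\<bar> + \<bar>g \<omega>\<bar>"
  shows "upper_E_abs \<P> h \<le> upper_E_abs \<P> f + upper_E_abs \<P> g"
  unfolding upper_E_abs_def
proof (rule SUP_least)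
  fix P assume "P \<in> \<P>"
  then have P': "prob_on_paths P" using P by blast
  have "(\<integral>\<^sup>+ \<omega>. e2ennreal \<bar>h \<omega>\<bar> \<partial>P) \<le> (\<integral>\<^sup>+ \<omega>. e2ennreal \<bar>f \<omega>\<bar> + e2ennreal \<bar>g \<omega>\<bar> \<partial>P)"
    using le P' unfolding prob_on_paths_def
    by (intro nn_integral_mono) (auto simp: e2ennreal_add[symmetric] intro!: e2ennreal_mono)
  also have "\<dots> = (\<integral>\<^sup>+ \<omega>. e2ennreal \<bar>f \<omega>\<bar> \<partial>P) + (\<integral>\<^sup>+ \<omega>. e2ennreal \<bar>g \<omega>\<bar> \<partial>P)"
    using f g by (intro nn_integral_add) (auto intro: measurable_path_space_imp_measurable[OF P'])
  also have "\<dots> \<le> (SUP P\<in>\<P>. \<integral>\<^sup>+ \<omega>. e2ennreal \<bar>f \<omega>\<bar> \<partial>P) + (SUP P\<in>\<P>. \<integral>\<^sup>+ \<omega>. e2ennreal \<bar>g \<omega>\<bar> \<partial>P)"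
    using \<open>P \<in> \<P>\<close> by (intro add_mono SUP_upper)
  finally show "(\<integral>\<^sup>+ \<omega>. e2ennreal \<bar>h \<omega>\<bar> \<partial>P) \<le> \<dots>" .
qed

lemma LL1_sandwich:
  assumes P: "\<forall>P\<in>\<P>. prob_on_paths P"
    and Y: "Y \<in> LL1 \<P>" and X: "X \<in> LL1 \<P>" and Z: "Z \<in> L0"
    and between: "\<forall>\<omega>\<in>Omega. Y \<omega> \<le> Z \<omega> \<and> Z \<omega> \<le> X \<omega>"
  shows "Z \<in> LL1 \<P>"
proof -
  have "\<bar>Z \<omega>\<bar> \<le> \<bar>Y \<omega>\<bar> + \<bar>X \<omega>\<bar>" if "\<omega> \<in> Omega" for \<omega>
    using between that by (cases "X \<omega>"; cases "Y \<omega>"; cases "Z \<omega>") auto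
  then have "upper_E_abs \<P> Z \<le> upper_E_abs \<P> Y + upper_E_abs \<P> X"
    using X Y unfolding LL1_def L0_def by (intro upper_E_abs_le_add[OF P]) auto
  also have "\<dots> < \<infinity>"
    using X Y unfolding LL1_def by (simp add: ennreal_add_less_top)
  finally show ?thesis using Z unfolding LL1_def by blast
qed

lemma ereal_abs_min_diff_le:
  "\<bar>min x y - ereal (min a b)\<bar> \<le> \<bar>x - ereal a\<bar> + \<bar>y - ereal b\<bar>"
  by (cases x; cases y) (auto simp: min_def abs_real_def split: if_splits)

lemma L1G_min:
  fixes X X' :: "(real \<Rightarrow> real ^ 'd) \<Rightarrow> ereal"
  assumes P: "\<forall>P\<in>\<P>. prob_on_paths P" and X: "X \<in> L1G \<P>" and X': "X' \<in> L1G \<P>"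
  shows "(\<lambda>\<omega>. min (X \<omega>) (X' \<omega>)) \<in> L1G \<P>"
proof -
  obtain Xs where Xs: "\<forall>n. lip_cyl (Xs n)"
      and lim: "(\<lambda>n. upper_E_abs \<P> (\<lambda>\<omega>. X \<omega> - ereal (Xs n \<omega>))) \<longlonglongrightarrow> 0"
      and mX: "X \<in> borel_measurable path_space"
    using X unfolding L1G_def L0_def by blast
  obtain Xs' where Xs': "\<forall>n. lip_cyl (Xs' n)"
      and lim': "(\<lambda>n. upper_E_abs \<P> (\<lambda>\<omega>. X' \<omega> - ereal (Xs' n \<omega>))) \<longlonglongrightarrow> 0"
      and mX': "X' \<in> borel_measurable path_space"
    using X' unfolding L1G_def L0_def by blast
  have meas_diff: "(\<lambda>\<omega>. Z \<omega> - ereal (f \<omega>)) \<in> borel_measurable path_space"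
    if "Z \<in> borel_measurable path_space" "lip_cyl f" for Z f
    using that by (intro borel_measurable_ereal_diff borel_measurable_ereal
        path_continuous_measurable lip_cyl_path_continuous)
  let ?E = "\<lambda>n. upper_E_abs \<P> (\<lambda>\<omega>. min (X \<omega>) (X' \<omega>) - ereal (min (Xs n \<omega>) (Xs' n \<omega>)))"
  let ?D = "\<lambda>n. upper_E_abs \<P> (\<lambda>\<omega>. X \<omega> - ereal (Xs n \<omega>))"
  let ?D' = "\<lambda>n. upper_E_abs \<P> (\<lambda>\<omega>. X' \<omega> - ereal (Xs' n \<omega>))"
  have "?E n \<le> ?D n + ?D' n" for n
  proof (rule upper_E_abs_le_add[OF P])
    show "(\<lambda>\<omega>. X \<omega> - ereal (Xs n \<omega>)) \<in> borel_measurable path_space"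
      using mX Xs by (intro meas_diff) auto
    show "(\<lambda>\<omega>. X' \<omega> - ereal (Xs' n \<omega>)) \<in> borel_measurable path_space"
      using mX' Xs' by (intro meas_diff) auto
  qed (intro ballI ereal_abs_min_diff_le)
  then have conv: "?E \<longlonglongrightarrow> 0"
    using tendsto_add[OF lim lim'] by (intro tendsto_sandwich[of "\<lambda>_. 0" ?E _ "\<lambda>n. ?D n + ?D' n"]) auto
  moreover have "\<forall>n. lip_cyl (\<lambda>\<omega>. min (Xs n \<omega>) (Xs' n \<omega>))"
    using Xs Xs' by (simp add: lip_cyl_min)
  ultimately have "\<exists>Zs. (\<forall>n. lip_cyl (Zs n)) \<and>
      (\<lambda>n. upper_E_abs \<P> (\<lambda>\<omega>. min (X \<omega>) (X' \<omega>) - ereal (Zs n \<omega>))) \<longlonglongrightarrow> 0"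
    by (intro exI[of _ "\<lambda>n \<omega>. min (Xs n \<omega>) (Xs' n \<omega>)"]) simp
  moreover have "(\<lambda>\<omega>. min (X \<omega>) (X' \<omega>)) \<in> L0"
    using mX mX' unfolding L0_def by (intro borel_measurable_min)
  ultimately show ?thesis
    unfolding L1G_def by blast
qed

lemma L1G_Min:
  assumes P: "\<forall>P\<in>\<P>. prob_on_paths P"
    and "finite I" "I \<noteq> {}" "\<forall>i\<in>I. F i \<in> L1G \<P>"
  shows "(\<lambda>\<omega>. Min ((\<lambda>i. F i \<omega>) ` I)) \<in> L1G \<P>"
  using assms(2-4)
proof (induction I rule: finite_ne_induct)
  case (singleton i)
  then show ?case by simp
next
  case (insert i I)
  then have "(\<lambda>\<omega>. min (F i \<omega>) (Min ((\<lambda>i. F i \<omega>) ` I))) \<in> L1G \<P>"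
    by (intro L1G_min[OF P]) auto
  moreover have "Min ((\<lambda>i. F i \<omega>) ` insert i I) = min (F i \<omega>) (Min ((\<lambda>i. F i \<omega>) ` I))" for \<omega>
    using insert.hyps(1,2) by simp
  ultimately show ?case
    by simp
qed

lemma Min_diagonal_decseq:
  fixes a :: "nat \<Rightarrow> nat \<Rightarrow> 'a::linorder"
  assumes "\<And>m. decseq (a m)"
  shows "decseq (\<lambda>j. Min ((\<lambda>m. a m j) ` {..j}))"
proof (rule decseq_SucI)
  fix j
  have "Min ((\<lambda>m. a m (Suc j)) ` {..Suc j}) \<le> Min ((\<lambda>m. a m (Suc j)) ` {..j})"
    by (intro Min_antimono) auto
  also have "\<dots> \<le> Min ((\<lambda>m. a m j) ` {..j})"
    using assms by (auto simp: decseq_Suc_iff Min_le_iff)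
  finally show "Min ((\<lambda>m. a m (Suc j)) ` {..Suc j}) \<le> Min ((\<lambda>m. a m j) ` {..j})" .
qed

lemma Min_diagonal_tendsto_INF:
  fixes a :: "nat \<Rightarrow> nat \<Rightarrow> 'a::{complete_linorder, linorder_topology}"
  assumes dec: "\<And>m. decseq (a m)" and lim: "\<And>m. a m \<longlonglongrightarrow> x m"
  shows "(\<lambda>j. Min ((\<lambda>m. a m j) ` {..j})) \<longlonglongrightarrow> (INF m. x m)"
proof -
  let ?b = "\<lambda>j. Min ((\<lambda>m. a m j) ` {..j})"
  have "(INF m. x m) \<le> ?b j" for j
    using decseq_ge[OF dec lim] by (auto intro: INF_lower2)
  moreover have "(INF j. ?b j) \<le> x m" for m
  proof (rule LIMSEQ_le_const[OF lim], intro exI allI impI)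
    fix j assume "m \<le> j"
    then show "(INF j. ?b j) \<le> a m j"
      by (intro INF_lower2[of j]) auto
  qed
  ultimately have "(INF j. ?b j) = (INF m. x m)"
    by (intro antisym INF_greatest)
  moreover have "?b \<longlonglongrightarrow> (INF j. ?b j)"
    using dec by (intro LIMSEQ_INF Min_diagonal_decseq)
  ultimately show ?thesis
    by simp
qed

lemma capacity_empty: "capacity \<P> {} = 0"
  unfolding capacity_def by (simp add: bot_ennreal[symmetric])

lemma capacity_UN_eq_0:
  fixes N :: "nat \<Rightarrow> (real \<Rightarrow> real ^ 'd) set"
  assumes P: "\<forall>P\<in>\<P>. prob_on_paths P"
    and N: "\<And>m. N m \<in> sets path_space" "\<And>m. capacity \<P> (N m) = 0"
  shows "capacity \<P> (\<Union>m. N m) = 0"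
proof -
  have "emeasure P (\<Union>m. N m) = 0" if "P \<in> \<P>" for P
  proof -
    have "emeasure P (N m) = 0" for m
      using N(2)[of m] SUP_upper[OF that, of "\<lambda>P. emeasure P (N m)"] unfolding capacity_def by simp
    then have "N m \<in> null_sets P" for m
      using N(1) P that unfolding prob_on_paths_def by auto
    then have "(\<Union>m. N m) \<in> null_sets P"
      by (rule null_sets_UN)
    then show ?thesis by auto
  qed
  then have "capacity \<P> (\<Union>m. N m) = (SUP P\<in>\<P>. 0)"
    unfolding capacity_def by (rule SUP_cong[OF refl])
  then show ?thesis
    by (simp add: bot_ennreal[symmetric])
qed

lemma quasi_surely_all:
  assumes P: "\<forall>P\<in>\<P>. prob_on_paths P" and Q: "\<And>m::nat. quasi_surely \<P> (Q m)"
  shows "quasi_surely \<P> (\<lambda>\<omega>. \<forall>m. Q m \<omega>)"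
proof -
  obtain N where N: "\<And>m. N m \<in> sets path_space" "\<And>m. capacity \<P> (N m) = 0"
      and Q_N: "\<And>m. \<forall>\<omega>\<in>Omega - N m. Q m \<omega>"
    using Q unfolding quasi_surely_def by metis
  have "capacity \<P> (\<Union>m. N m) = 0"
    using P N by (rule capacity_UN_eq_0)
  then show ?thesis
    unfolding quasi_surely_def using N Q_N by (intro bexI[of _ "\<Union>m. N m"]) auto
qed

lemma quasi_surely_everywhere: "\<forall>\<omega>\<in>Omega. Q \<omega> \<Longrightarrow> quasi_surely \<P> Q"
  unfolding quasi_surely_def using capacity_empty[of \<P>] by (intro bexI[of _ "{}"]) auto

lemma quasi_surely_mono:
  assumes "quasi_surely \<P> Q" "\<forall>\<omega>\<in>Omega. Q \<omega> \<longrightarrow> R \<omega>"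
  shows "quasi_surely \<P> R"
  using assms unfolding quasi_surely_def by blast

lemma L1G_star_INF:
  fixes X :: "nat \<Rightarrow> (real \<Rightarrow> real ^ 'd) \<Rightarrow> ereal"
  assumes P: "\<forall>P\<in>\<P>. prob_on_paths P"
    and X: "\<forall>m. X m \<in> L1G_star \<P>" and Y: "Y \<in> LL1 \<P>"
    and X_ge: "\<forall>m. \<forall>\<omega>\<in>Omega. Y \<omega> \<le> X m \<omega>"
  shows "(\<lambda>\<omega>. INF m. X m \<omega>) \<in> L1G_star \<P>"
proof -
  have INF_LL1: "(\<lambda>\<omega>. INF m. X m \<omega>) \<in> LL1 \<P>"
  proof (rule LL1_sandwich[OF P Y])
    show "X 0 \<in> LL1 \<P>"
      using X unfolding L1G_star_def by blast
    show "(\<lambda>\<omega>. INF m. X m \<omega>) \<in> L0"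
      using X unfolding L0_def L1G_star_def LL1_def by (intro borel_measurable_INF) auto
    show "\<forall>\<omega>\<in>Omega. Y \<omega> \<le> (INF m. X m \<omega>) \<and> (INF m. X m \<omega>) \<le> X 0 \<omega>"
      using X_ge by (auto intro: INF_greatest INF_lower)
  qed
  have "\<forall>m. \<exists>Am. (\<forall>j. Am j \<in> L1G \<P>) \<and>
      quasi_surely \<P> (\<lambda>\<omega>. decseq (\<lambda>j. Am j \<omega>) \<and> (\<lambda>j. Am j \<omega>) \<longlonglongrightarrow> X m \<omega>)"
    using X unfolding L1G_star_def by blast
  then obtain A where A: "\<And>m j. A m j \<in> L1G \<P>"
    and A_qs: "\<And>m. quasi_surely \<P> (\<lambda>\<omega>. decseq (\<lambda>j. A m j \<omega>) \<and> (\<lambda>j. A m j \<omega>) \<longlonglongrightarrow> X m \<omega>)"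
    by (auto dest!: choice)
  have "quasi_surely \<P> (\<lambda>\<omega>. \<forall>m. decseq (\<lambda>j. A m j \<omega>) \<and> (\<lambda>j. A m j \<omega>) \<longlonglongrightarrow> X m \<omega>)"
    using P A_qs by (rule quasi_surely_all)
  then have W_qs: "quasi_surely \<P> (\<lambda>\<omega>. decseq (\<lambda>j. Min ((\<lambda>m. A m j \<omega>) ` {..j})) \<and>
      (\<lambda>j. Min ((\<lambda>m. A m j \<omega>) ` {..j})) \<longlonglongrightarrow> (INF m. X m \<omega>))"
    by (rule quasi_surely_mono) (auto intro: Min_diagonal_decseq Min_diagonal_tendsto_INF)
  have W_L1G: "(\<lambda>\<omega>. Min ((\<lambda>m. A m j \<omega>) ` {..j})) \<in> L1G \<P>" for j
    using A by (intro L1G_Min[OF P]) auto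
  have "\<exists>Xs. (\<forall>j. Xs j \<in> L1G \<P>) \<and>
      quasi_surely \<P> (\<lambda>\<omega>. decseq (\<lambda>j. Xs j \<omega>) \<and> (\<lambda>j. Xs j \<omega>) \<longlonglongrightarrow> (INF m. X m \<omega>))"
    using W_L1G W_qs by (intro exI[of _ "\<lambda>j \<omega>. Min ((\<lambda>m. A m j \<omega>) ` {..j})"]) simp
  with INF_LL1 show ?thesis
    unfolding L1G_star_def by blast
qed

lemma INF_shift_atLeast:
  fixes f :: "nat \<Rightarrow> 'a::complete_lattice"
  shows "(INF m. f (n + m)) = (INF m\<in>{n..}. f m)"
proof -
  have "(INF m. f (n + m)) = Inf (f ` range (plus n))"
    by (simp add: image_image)
  also have "range (plus n) = {n..}"
    using image_add_atLeast[of n 0] by simp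
  finally show ?thesis .
qed

theorem proposition3p20:
  fixes \<P> :: "(real \<Rightarrow> real ^ 'd) measure set"
    and X :: "nat \<Rightarrow> (real \<Rightarrow> real ^ 'd) \<Rightarrow> ereal"
    and Y :: "(real \<Rightarrow> real ^ 'd) \<Rightarrow> ereal"
  assumes P_nonempty: "\<P> \<noteq> {}"
    and P_prob: "\<forall>P\<in>\<P>. prob_on_paths P"
    and P_wc: "weakly_compact \<P>"
    and X_in: "\<forall>n. X n \<in> L1G_star \<P>"
    and Y_in: "Y \<in> LL1 \<P>"
    and X_ge: "\<forall>n. \<forall>\<omega>\<in>Omega. Y \<omega> \<le> X n \<omega>"
  shows "(\<lambda>\<omega>. liminf (\<lambda>n. X n \<omega>)) \<in> L1G_star_star \<P>"
proof -
  define Z where "Z n \<omega> = (INF m\<in>{n..}. X m \<omega>)" for n \<omega>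
  have Z: "Z n \<in> L1G_star \<P>" for n
  proof -
    have "(\<lambda>\<omega>. INF m. X (n + m) \<omega>) \<in> L1G_star \<P>"
      using X_in X_ge by (intro L1G_star_INF[OF P_prob _ Y_in]) auto
    then show ?thesis
      unfolding Z_def INF_shift_atLeast[symmetric] .
  qed
  have Z_inc: "incseq (\<lambda>n. Z n \<omega>)" for \<omega>
    unfolding Z_def by (rule incseq_SucI) (auto intro: INF_superset_mono)
  moreover have "(\<lambda>n. Z n \<omega>) \<longlonglongrightarrow> liminf (\<lambda>n. X n \<omega>)" for \<omega>
    using Z_inc unfolding liminf_SUP_INF Z_def by (rule LIMSEQ_SUP)
  ultimately have "quasi_surely \<P> (\<lambda>\<omega>. incseq (\<lambda>n. Z n \<omega>) \<and> (\<lambda>n. Z n \<omega>) \<longlonglongrightarrow> liminf (\<lambda>n. X n \<omega>))"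
    by (intro quasi_surely_everywhere) simp
  moreover have "(\<lambda>\<omega>. liminf (\<lambda>n. X n \<omega>)) \<in> L0"
    using X_in unfolding L0_def L1G_star_def LL1_def by (intro borel_measurable_liminf) auto
  ultimately show ?thesis
    unfolding L1G_star_star_def using Z by blast
qed

end
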